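(* On the set of irreducible transition matrices on the finite set $S$ that are reversible with respect to $\pi$, efficiency dominance is a partial order: (a) every such $P$ efficiency-dominates itself; (b) if $P$ efficiency-dominates $Q$ and $Q$ efficiency-dominates $P$, then $P=Q$; (c) if $P$ efficiency-dominates $Q$ and $Q$ efficiency-dominates $R$, then $P$ efficiency-dominates $R$.
   Context: $S$ is a finite set, and $\pi$ is a probability distribution on $S$ with $\pi(x)>0$ for all $x$. A transition matrix $P$ is reversible with respect to $\pi$ if $\pi(x)P(x,y)=\pi(y)P(y,x)$ for all $x,y$; irreducible if every state can be reached from every other with positive probability in some number of steps. For a Markov chain $X_1,X_2,\dots$ with transition matrix $P$ and $X_1\sim\pi$, $v(f,P)=\lim_{N\to\infty}\frac1N\mathrm{Var}\big(\sum_{i=1}^N f(X_i)\big)$. $P$ efficiency-dominates $Q$ if $v(f,P)\le v(f,Q)$ for all $f:S\to\mathbb R$. *)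

theory Defs
  imports Complex_Main
begin

text \<open>States: a finite type 'a (the finite set S is UNIV). Matrices are functions 'a => 'a => real.\<close>

definition transition_matrix :: "('a::finite \<Rightarrow> 'a \<Rightarrow> real) \<Rightarrow> bool" where
  "transition_matrix P \<longleftrightarrow> (\<forall>x y. 0 \<le> P x y) \<and> (\<forall>x. (\<Sum>y\<in>UNIV. P x y) = 1)"

definition reversible :: "('a::finite \<Rightarrow> real) \<Rightarrow> ('a \<Rightarrow> 'a \<Rightarrow> real) \<Rightarrow> bool" where
  "reversible \<pi> P \<longleftrightarrow> (\<forall>x y. \<pi> x * P x y = \<pi> y * P y x)"

fun mat_pow :: "('a::finite \<Rightarrow> 'a \<Rightarrow> real) \<Rightarrow> nat \<Rightarrow> 'a \<Rightarrow> 'a \<Rightarrow> real" where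
  "mat_pow P 0 = (\<lambda>x y. if x = y then 1 else 0)"
| "mat_pow P (Suc n) = (\<lambda>x y. \<Sum>z\<in>UNIV. mat_pow P n x z * P z y)"

definition irreducible_chain :: "('a::finite \<Rightarrow> 'a \<Rightarrow> real) \<Rightarrow> bool" where
  "irreducible_chain P \<longleftrightarrow> (\<forall>x y. \<exists>n. mat_pow P n x y > 0)"

fun path_prob_from :: "('a \<Rightarrow> 'a \<Rightarrow> real) \<Rightarrow> 'a \<Rightarrow> 'a list \<Rightarrow> real" where
  "path_prob_from P x [] = 1"
| "path_prob_from P x (y # ys) = P x y * path_prob_from P y ys"

text \<open>P(X_1 = x_1, ..., X_N = x_N) for the chain with X_1 ~ pi.\<close>
fun path_prob :: "('a \<Rightarrow> real) \<Rightarrow> ('a \<Rightarrow> 'a \<Rightarrow> real) \<Rightarrow> 'a list \<Rightarrow> real" where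
  "path_prob \<pi> P [] = 1"
| "path_prob \<pi> P (x # xs) = \<pi> x * path_prob_from P x xs"

text \<open>Var(sum_{i=1}^N f(X_i)), computed over the (finite) law of (X_1,...,X_N).\<close>
definition chain_sum_var ::
  "('a::finite \<Rightarrow> real) \<Rightarrow> ('a \<Rightarrow> 'a \<Rightarrow> real) \<Rightarrow> ('a \<Rightarrow> real) \<Rightarrow> nat \<Rightarrow> real" where
  "chain_sum_var \<pi> P f N =
     (let paths = {xs :: 'a list. length xs = N};
          m = (\<Sum>xs\<in>paths. path_prob \<pi> P xs * sum_list (map f xs))
      in (\<Sum>xs\<in>paths. path_prob \<pi> P xs * (sum_list (map f xs) - m)\<^sup>2))"

definition asym_var :: "('a::finite \<Rightarrow> real) \<Rightarrow> ('a \<Rightarrow> real) \<Rightarrow> ('a \<Rightarrow> 'a \<Rightarrow> real) \<Rightarrow> real" where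
  "asym_var \<pi> f P = lim (\<lambda>N. chain_sum_var \<pi> P f N / real N)"

definition eff_dominates ::
  "('a::finite \<Rightarrow> real) \<Rightarrow> ('a \<Rightarrow> 'a \<Rightarrow> real) \<Rightarrow> ('a \<Rightarrow> 'a \<Rightarrow> real) \<Rightarrow> bool" where
  "eff_dominates \<pi> P Q \<longleftrightarrow> (\<forall>f :: 'a \<Rightarrow> real. asym_var \<pi> f P \<le> asym_var \<pi> f Q)"

end

theory Submission
  imports Defs "HOL-Analysis.Analysis"
begin

(* Only antisymmetry has content. For mean-zero f let h solve the Poisson equation h - P h = f.
   The expected sum of f over the next k steps telescopes to P h - P^(k+1) h, whence
   Var(f(X_1) + ... + f(X_N)) = N (2 <f,h> - <f,f>) + O(1), i.e. v(f,P) = 2 <f,h> - <f,f> with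
   <.,.> the inner product of L^2(pi). For reversible P the solution operator f |-> h is
   self-adjoint, so by polarization the quadratic form v(-,P) determines it on mean-zero
   functions; this determines I - P there, and hence P. *)

section \<open>The Markov operator and the inner product of L^2(pi)\<close>

definition markov_op :: "('a::finite \<Rightarrow> 'a \<Rightarrow> real) \<Rightarrow> ('a \<Rightarrow> real) \<Rightarrow> 'a \<Rightarrow> real" where
  "markov_op P u x = (\<Sum>y\<in>UNIV. P x y * u y)"

definition pi_exp :: "('a::finite \<Rightarrow> real) \<Rightarrow> ('a \<Rightarrow> real) \<Rightarrow> real" where
  "pi_exp \<pi> u = (\<Sum>x\<in>UNIV. \<pi> x * u x)"

definition pi_inner :: "('a::finite \<Rightarrow> real) \<Rightarrow> ('a \<Rightarrow> real) \<Rightarrow> ('a \<Rightarrow> real) \<Rightarrow> real" where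
  "pi_inner \<pi> u v = pi_exp \<pi> (\<lambda>x. u x * v x)"

definition stationary :: "('a::finite \<Rightarrow> real) \<Rightarrow> ('a \<Rightarrow> 'a \<Rightarrow> real) \<Rightarrow> bool" where
  "stationary \<pi> P \<longleftrightarrow> (\<forall>y. (\<Sum>x\<in>UNIV. \<pi> x * P x y) = \<pi> y)"

lemma markov_op_add: "markov_op P (\<lambda>y. u y + v y) x = markov_op P u x + markov_op P v x"
  by (simp add: markov_op_def sum.distrib distrib_left)

lemma markov_op_diff: "markov_op P (\<lambda>y. u y - v y) x = markov_op P u x - markov_op P v x"
  by (simp add: markov_op_def sum_subtractf right_diff_distrib)

lemma markov_op_const: "transition_matrix P \<Longrightarrow> markov_op P (\<lambda>_. c) x = c"
  by (simp add: markov_op_def transition_matrix_def sum_distrib_right[symmetric])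

lemma markov_op_indicator: "markov_op P (\<lambda>z. if z = y then 1 else 0) x = P x y"
  by (simp add: markov_op_def if_distrib cong: if_cong)

lemma abs_markov_op_le:
  assumes "transition_matrix P" and "\<And>y. \<bar>v y\<bar> \<le> B"
  shows "\<bar>markov_op P v x\<bar> \<le> B"
proof -
  have "\<bar>markov_op P v x\<bar> \<le> (\<Sum>y\<in>UNIV. \<bar>P x y * v y\<bar>)"
    unfolding markov_op_def by (rule sum_abs)
  also have "\<dots> \<le> (\<Sum>y\<in>UNIV. P x y * B)"
    using assms by (intro sum_mono) (simp add: transition_matrix_def abs_mult mult_left_mono)
  also have "\<dots> = B"
    using assms(1) by (simp add: transition_matrix_def sum_distrib_right[symmetric])
  finally show ?thesis .
qed

lemma abs_markov_op_funpow_le: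
  assumes "transition_matrix P" and "\<And>y. \<bar>v y\<bar> \<le> B"
  shows "\<bar>(markov_op P ^^ k) v x\<bar> \<le> B"
  using assms by (induction k arbitrary: x) (auto intro: abs_markov_op_le)

lemma markov_op_funpow_diff:
  "(markov_op P ^^ k) (\<lambda>y. u y - v y) = (\<lambda>x. (markov_op P ^^ k) u x - (markov_op P ^^ k) v x)"
proof (induction k)
  case (Suc k)
  show ?case by (rule ext) (simp add: Suc markov_op_diff)
qed simp

lemma pi_exp_add: "pi_exp \<pi> (\<lambda>x. u x + v x) = pi_exp \<pi> u + pi_exp \<pi> v"
  by (simp add: pi_exp_def sum.distrib distrib_left)

lemma pi_exp_diff: "pi_exp \<pi> (\<lambda>x. u x - v x) = pi_exp \<pi> u - pi_exp \<pi> v"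
  by (simp add: pi_exp_def sum_subtractf right_diff_distrib)

lemma pi_exp_mult: "pi_exp \<pi> (\<lambda>x. c * u x) = c * pi_exp \<pi> u"
  by (simp add: pi_exp_def sum_distrib_left algebra_simps)

lemma pi_exp_const: "pi_exp \<pi> (\<lambda>_. c) = c * (\<Sum>x\<in>UNIV. \<pi> x)"
  by (simp add: pi_exp_def sum_distrib_left mult.commute)

lemma pi_exp_markov_op:
  assumes "stationary \<pi> P"
  shows "pi_exp \<pi> (markov_op P u) = pi_exp \<pi> u"
proof -
  have "pi_exp \<pi> (markov_op P u) = (\<Sum>x\<in>UNIV. \<Sum>y\<in>UNIV. \<pi> x * P x y * u y)"
    by (simp add: pi_exp_def markov_op_def sum_distrib_left mult.assoc)
  also have "\<dots> = (\<Sum>y\<in>UNIV. \<Sum>x\<in>UNIV. \<pi> x * P x y * u y)"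
    by (rule sum.swap)
  also have "\<dots> = pi_exp \<pi> u"
    using assms by (simp add: stationary_def pi_exp_def sum_distrib_right[symmetric])
  finally show ?thesis .
qed

lemma reversible_imp_stationary:
  assumes "transition_matrix P" and "reversible \<pi> P"
  shows "stationary \<pi> P"
  unfolding stationary_def
proof
  fix y
  have "(\<Sum>x\<in>UNIV. \<pi> x * P x y) = (\<Sum>x\<in>UNIV. \<pi> y * P y x)"
    using assms(2) by (simp add: reversible_def)
  also have "\<dots> = \<pi> y"
    using assms(1) by (simp add: transition_matrix_def sum_distrib_left[symmetric])
  finally show "(\<Sum>x\<in>UNIV. \<pi> x * P x y) = \<pi> y" .
qed

lemma pi_inner_commute: "pi_inner \<pi> u v = pi_inner \<pi> v u"
  by (simp add: pi_inner_def mult.commute)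

lemma pi_inner_add_left:
  "pi_inner \<pi> (\<lambda>x. u x + v x) w = pi_inner \<pi> u w + pi_inner \<pi> v w"
  by (simp add: pi_inner_def pi_exp_add[symmetric] distrib_right)

lemma pi_inner_add_right:
  "pi_inner \<pi> u (\<lambda>x. v x + w x) = pi_inner \<pi> u v + pi_inner \<pi> u w"
  by (simp add: pi_inner_def pi_exp_add[symmetric] distrib_left)

lemma pi_inner_diff_left:
  "pi_inner \<pi> (\<lambda>x. u x - v x) w = pi_inner \<pi> u w - pi_inner \<pi> v w"
  by (simp add: pi_inner_def pi_exp_diff[symmetric] left_diff_distrib)

lemma pi_inner_diff_right:
  "pi_inner \<pi> u (\<lambda>x. v x - w x) = pi_inner \<pi> u v - pi_inner \<pi> u w"
  by (simp add: pi_inner_def pi_exp_diff[symmetric] right_diff_distrib)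

lemma pi_inner_self: "pi_inner \<pi> u u = pi_exp \<pi> (\<lambda>x. (u x)\<^sup>2)"
  by (simp add: pi_inner_def power2_eq_square)

lemma pi_inner_markov_op:
  assumes "reversible \<pi> P"
  shows "pi_inner \<pi> (markov_op P u) v = pi_inner \<pi> u (markov_op P v)"
proof -
  have "pi_inner \<pi> (markov_op P u) v = (\<Sum>x\<in>UNIV. \<Sum>y\<in>UNIV. (\<pi> x * P x y) * u y * v x)"
    by (simp add: pi_inner_def pi_exp_def markov_op_def sum_distrib_left sum_distrib_right
        algebra_simps)
  also have "\<dots> = (\<Sum>x\<in>UNIV. \<Sum>y\<in>UNIV. (\<pi> y * P y x) * u y * v x)"
    using assms by (simp add: reversible_def)
  also have "\<dots> = (\<Sum>y\<in>UNIV. \<Sum>x\<in>UNIV. (\<pi> y * P y x) * u y * v x)"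
    by (rule sum.swap)
  also have "\<dots> = pi_inner \<pi> u (markov_op P v)"
    by (simp add: pi_inner_def pi_exp_def markov_op_def sum_distrib_left sum_distrib_right
        algebra_simps)
  finally show ?thesis .
qed

lemma abs_pi_inner_le:
  assumes "\<And>x. \<bar>v x\<bar> \<le> B"
  shows "\<bar>pi_inner \<pi> u v\<bar> \<le> (\<Sum>x\<in>UNIV. \<bar>\<pi> x * u x\<bar>) * B"
proof -
  have "\<bar>pi_inner \<pi> u v\<bar> \<le> (\<Sum>x\<in>UNIV. \<bar>\<pi> x * u x\<bar> * \<bar>v x\<bar>)"
    using sum_abs[of "\<lambda>x. \<pi> x * (u x * v x)" UNIV]
    by (simp add: pi_inner_def pi_exp_def abs_mult mult.assoc)
  also have "\<dots> \<le> (\<Sum>x\<in>UNIV. \<bar>\<pi> x * u x\<bar> * B)"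
    using assms by (intro sum_mono mult_left_mono) auto
  finally show ?thesis by (simp add: sum_distrib_right)
qed

lemma pi_inner_self_eq_0:
  assumes "\<forall>x. \<pi> x > 0" and "pi_inner \<pi> u u = 0"
  shows "u = (\<lambda>_. 0)"
proof
  fix x
  have "\<forall>x\<in>UNIV. \<pi> x * (u x * u x) = 0"
    using assms unfolding pi_inner_def pi_exp_def
    by (subst sum_nonneg_eq_0_iff[symmetric]) (auto simp: less_imp_le)
  then have "\<pi> x * (u x * u x) = 0" by blast
  then show "u x = 0" using assms(1)[rule_format, of x] by (auto simp: mult_eq_0_iff)
qed

section \<open>Moments of path sums\<close>

lemma sum_lists_length_Suc:
  "(\<Sum>xs\<in>{xs::'a::finite list. length xs = Suc n}. F xs)
     = (\<Sum>y\<in>UNIV. \<Sum>ys\<in>{ys. length ys = n}. F (y # ys))"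
proof -
  have lists: "{xs::'a list. length xs = Suc n} = (\<lambda>(y, ys). y # ys) ` (UNIV \<times> {ys. length ys = n})"
    by (auto simp: length_Suc_conv image_iff)
  have "inj_on (\<lambda>(y::'a, ys). y # ys) (UNIV \<times> {ys. length ys = n})"
    by (auto simp: inj_on_def)
  then show ?thesis
    unfolding lists by (simp add: sum.reindex sum.cartesian_product split_def)
qed

(* E[F(X_1, ..., X_n) | X_0 = x]: the starting state is not part of the path. *)
definition path_expect :: "('a::finite \<Rightarrow> 'a \<Rightarrow> real) \<Rightarrow> nat \<Rightarrow> 'a \<Rightarrow> ('a list \<Rightarrow> real) \<Rightarrow> real" where
  "path_expect P n x F = (\<Sum>ys\<in>{ys. length ys = n}. path_prob_from P x ys * F ys)"

lemma path_expect_0 [simp]: "path_expect P 0 x F = F []"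
  by (simp add: path_expect_def)

lemma path_expect_Suc:
  "path_expect P (Suc n) x F = markov_op P (\<lambda>y. path_expect P n y (\<lambda>ys. F (y # ys))) x"
  by (simp add: path_expect_def markov_op_def sum_lists_length_Suc sum_distrib_left mult.assoc)

lemma path_expect_add:
  "path_expect P n x (\<lambda>ys. F ys + G ys) = path_expect P n x F + path_expect P n x G"
  by (simp add: path_expect_def sum.distrib distrib_left)

lemma path_expect_mult: "path_expect P n x (\<lambda>ys. c * F ys) = c * path_expect P n x F"
  by (simp add: path_expect_def sum_distrib_left algebra_simps)

lemma path_expect_const: "transition_matrix P \<Longrightarrow> path_expect P n x (\<lambda>_. c) = c"
  by (induction n arbitrary: x) (simp_all add: path_expect_Suc markov_op_const)

lemma sum_path_prob_stationary:
  assumes "stationary \<pi> P" and "(\<Sum>x\<in>UNIV. \<pi> x) = 1"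
  shows "(\<Sum>xs\<in>{xs. length xs = n}. path_prob \<pi> P xs * F xs) = pi_exp \<pi> (\<lambda>x. path_expect P n x F)"
proof (cases n)
  case 0
  then show ?thesis using assms(2) by (simp add: pi_exp_const)
next
  case (Suc m)
  have "(\<Sum>xs\<in>{xs. length xs = n}. path_prob \<pi> P xs * F xs)
      = pi_exp \<pi> (\<lambda>y. path_expect P m y (\<lambda>ys. F (y # ys)))"
    by (simp add: Suc sum_lists_length_Suc pi_exp_def path_expect_def sum_distrib_left mult.assoc)
  also have "\<dots> = pi_exp \<pi> (\<lambda>x. path_expect P n x F)"
    using pi_exp_markov_op[OF assms(1)] by (simp add: Suc path_expect_Suc)
  finally show ?thesis .
qed

lemma path_expect_sum_Suc:
  assumes "transition_matrix P"
  shows "path_expect P (Suc n) x (\<lambda>ys. sum_list (map f ys))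
    = markov_op P (\<lambda>y. f y + path_expect P n y (\<lambda>ys. sum_list (map f ys))) x"
  using assms by (simp add: path_expect_Suc path_expect_add path_expect_const)

lemma path_expect_sum_sq_Suc:
  assumes "transition_matrix P"
  shows "path_expect P (Suc n) x (\<lambda>ys. (sum_list (map f ys))\<^sup>2)
    = markov_op P (\<lambda>y. (f y)\<^sup>2 + 2 * (f y * path_expect P n y (\<lambda>ys. sum_list (map f ys)))
        + path_expect P n y (\<lambda>ys. (sum_list (map f ys))\<^sup>2)) x"
  using assms
  by (simp add: path_expect_Suc power2_sum path_expect_add path_expect_mult path_expect_const
      algebra_simps)

lemma pi_exp_path_expect_sum:
  assumes "transition_matrix P" and "stationary \<pi> P"
  shows "pi_exp \<pi> (\<lambda>x. path_expect P n x (\<lambda>ys. sum_list (map f ys))) = real n * pi_exp \<pi> f"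
proof (induction n)
  case (Suc n)
  then show ?case
    using assms by (simp add: path_expect_sum_Suc pi_exp_markov_op pi_exp_add algebra_simps)
qed (simp add: pi_exp_def)

lemma pi_exp_path_expect_sum_sq:
  assumes "transition_matrix P" and "stationary \<pi> P"
  shows "pi_exp \<pi> (\<lambda>x. path_expect P N x (\<lambda>ys. (sum_list (map f ys))\<^sup>2))
    = real N * pi_exp \<pi> (\<lambda>x. (f x)\<^sup>2)
      + 2 * (\<Sum>k<N. pi_inner \<pi> f (\<lambda>x. path_expect P k x (\<lambda>ys. sum_list (map f ys))))"
proof (induction N)
  case (Suc N)
  have "pi_exp \<pi> (\<lambda>x. path_expect P (Suc N) x (\<lambda>ys. (sum_list (map f ys))\<^sup>2))
      = pi_exp \<pi> (\<lambda>x. (f x)\<^sup>2)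
        + 2 * pi_inner \<pi> f (\<lambda>x. path_expect P N x (\<lambda>ys. sum_list (map f ys)))
        + pi_exp \<pi> (\<lambda>x. path_expect P N x (\<lambda>ys. (sum_list (map f ys))\<^sup>2))"
    using assms
    by (simp add: path_expect_sum_sq_Suc pi_exp_markov_op pi_exp_add pi_exp_mult pi_inner_def)
  then show ?case
    using Suc by (simp add: algebra_simps)
qed (simp add: pi_exp_def)

lemma chain_sum_var_mean_zero:
  assumes "transition_matrix P" and "stationary \<pi> P" and "(\<Sum>x\<in>UNIV. \<pi> x) = 1"
    and "pi_exp \<pi> f = 0"
  shows "chain_sum_var \<pi> P f N = pi_exp \<pi> (\<lambda>x. path_expect P N x (\<lambda>ys. (sum_list (map f ys))\<^sup>2))"
  using assms
  by (simp add: chain_sum_var_def sum_path_prob_stationary pi_exp_path_expect_sum)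

lemma path_expect_sum_poisson:
  assumes "transition_matrix P" and "\<And>x. h x - markov_op P h x = f x"
  shows "path_expect P k x (\<lambda>ys. sum_list (map f ys)) = markov_op P h x - (markov_op P ^^ Suc k) h x"
proof (induction k arbitrary: x)
  case (Suc k)
  have "(\<lambda>y. f y + path_expect P k y (\<lambda>ys. sum_list (map f ys))) = (\<lambda>y. h y - (markov_op P ^^ Suc k) h y)"
    using Suc assms(2) by (intro ext) (metis add_diff_eq diff_add_cancel)
  then show ?case
    using assms(1) by (simp add: path_expect_sum_Suc markov_op_diff)
qed simp

(* The second Poisson solution u makes the remainder telescope as well, which keeps it bounded. *)
lemma chain_sum_var_poisson:
  assumes transition: "transition_matrix P" and stationary: "stationary \<pi> P"
    and prob: "(\<Sum>x\<in>UNIV. \<pi> x) = 1" and f: "pi_exp \<pi> f = 0"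
    and h: "\<And>x. h x - markov_op P h x = f x" and u: "\<And>x. u x - markov_op P u x = h x"
  shows "chain_sum_var \<pi> P f N = real N * (2 * pi_inner \<pi> f h - pi_inner \<pi> f f)
    + 2 * (pi_inner \<pi> f ((markov_op P ^^ Suc N) u) - pi_inner \<pi> f (markov_op P u))"
proof -
  define d where "d k = pi_inner \<pi> f ((markov_op P ^^ Suc k) u)" for k
  have Ph: "markov_op P h = (\<lambda>x. h x - f x)"
  proof
    fix x show "markov_op P h x = h x - f x" using h[of x] by linarith
  qed
  have telescope: "pi_inner \<pi> f (\<lambda>x. path_expect P k x (\<lambda>ys. sum_list (map f ys)))
      = pi_inner \<pi> f h - pi_inner \<pi> f f - (d k - d (Suc k))" for k
  proof -
    have "h = (\<lambda>x. u x - markov_op P u x)" using u by (simp add: fun_eq_iff)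
    then have "(markov_op P ^^ Suc k) h
        = (\<lambda>x. (markov_op P ^^ Suc k) u x - (markov_op P ^^ Suc k) (markov_op P u) x)"
      by (simp only: markov_op_funpow_diff)
    also have "(markov_op P ^^ Suc k) (markov_op P u) = (markov_op P ^^ Suc (Suc k)) u"
      by (metis funpow_Suc_right o_apply)
    finally show ?thesis
      using path_expect_sum_poisson[OF transition h]
      by (simp add: d_def Ph pi_inner_diff_right)
  qed
  have "chain_sum_var \<pi> P f N = real N * pi_inner \<pi> f f
      + 2 * (\<Sum>k<N. pi_inner \<pi> f h - pi_inner \<pi> f f - (d k - d (Suc k)))"
    using chain_sum_var_mean_zero[OF transition stationary prob f]
      pi_exp_path_expect_sum_sq[OF transition stationary] telescope
    by (simp add: pi_inner_self)
  also have "\<dots> = real N * (2 * pi_inner \<pi> f h - pi_inner \<pi> f f) + 2 * (d N - d 0)"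
    using sum_lessThan_telescope[of d N] by (simp add: sum_subtractf sum.distrib algebra_simps)
  finally show ?thesis by (simp add: d_def)
qed

lemma LIMSEQ_div_linear_plus_bounded:
  fixes g e :: "nat \<Rightarrow> real"
  assumes "\<And>N. g N = real N * C + e N" and "\<And>N. \<bar>e N\<bar> \<le> K"
  shows "(\<lambda>N. g N / real N) \<longlonglongrightarrow> C"
proof -
  have "(\<lambda>N. e N / real N) \<longlonglongrightarrow> 0"
  proof (rule Lim_null_comparison)
    show "\<forall>\<^sub>F N in sequentially. norm (e N / real N) \<le> K / real N"
      using assms(2) by (intro always_eventually) (simp add: divide_right_mono)
  qed (rule lim_const_over_n)
  then have "(\<lambda>N. C + e N / real N) \<longlonglongrightarrow> C"
    using tendsto_add[OF tendsto_const] by fastforce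
  moreover have "\<forall>\<^sub>F N in sequentially. C + e N / real N = g N / real N"
    using assms(1) by (intro eventually_sequentiallyI[of 1]) (simp add: field_simps)
  ultimately show ?thesis by (rule Lim_transform_eventually)
qed

section \<open>The Poisson equation and the asymptotic variance\<close>

lemma mat_pow_nonneg: "transition_matrix P \<Longrightarrow> 0 \<le> mat_pow P n x y"
  by (induction n arbitrary: y) (auto simp: transition_matrix_def intro!: sum_nonneg)

lemma mat_pow_pos_closed:
  assumes "transition_matrix P" and "A x" and "\<And>u v. A u \<Longrightarrow> 0 < P u v \<Longrightarrow> A v"
    and "0 < mat_pow P n x y"
  shows "A y"
  using assms(4)
proof (induction n arbitrary: y)
  case 0
  then show ?case using assms(2) by (simp split: if_splits)
next
  case (Suc n)
  then have "0 < (\<Sum>z\<in>UNIV. mat_pow P n x z * P z y)" by simp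
  then obtain z where "0 < mat_pow P n x z * P z y"
    by (meson not_le sum_nonpos)
  then have "0 < mat_pow P n x z" and "0 < P z y"
    using mat_pow_nonneg[OF assms(1), of n x z] assms(1)
    by (auto simp: zero_less_mult_iff transition_matrix_def)
  then show ?case using Suc.IH assms(3) by blast
qed

lemma harmonic_const:
  assumes transition: "transition_matrix P" and irreducible: "irreducible_chain P"
    and harmonic: "\<And>x. markov_op P h x = h x"
  shows "h x = h y"
proof -
  have "Max (range h) \<in> range h" by (intro Max_in) auto
  then obtain x0 where x0: "Max (range h) = h x0" by (rule rangeE)
  have max: "h z \<le> h x0" for z unfolding x0[symmetric] by (intro Max_ge) auto
  have step: "h v = h x0" if "h u = h x0" and "0 < P u v" for u v
  proof (rule ccontr)
    assume "h v \<noteq> h x0"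
    with max have "h v < h x0" by (simp add: order_less_le)
    have "markov_op P h u < markov_op P (\<lambda>_. h x0) u"
      unfolding markov_op_def
    proof (rule sum_strict_mono_ex1)
      show "\<forall>z\<in>UNIV. P u z * h z \<le> P u z * h x0"
        using transition max by (auto simp: transition_matrix_def intro: mult_left_mono)
      show "\<exists>z\<in>UNIV. P u z * h z < P u z * h x0"
        using mult_strict_left_mono[OF \<open>h v < h x0\<close> that(2)] by blast
    qed simp
    then show False using harmonic[of u] that(1) markov_op_const[OF transition] by simp
  qed
  have flat: "h z = h x0" for z
  proof -
    obtain n where "0 < mat_pow P n x0 z"
      using irreducible by (auto simp: irreducible_chain_def)
    then show ?thesis using mat_pow_pos_closed[OF transition, of "\<lambda>z. h z = h x0"] step by blast
  qed
  show ?thesis using flat[of x] flat[of y] by simp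
qed

(* Only meaningful for pi_exp pi f = 0: otherwise the equation has no solution. *)
definition poisson_sol :: "('a::finite \<Rightarrow> real) \<Rightarrow> ('a \<Rightarrow> 'a \<Rightarrow> real) \<Rightarrow> ('a \<Rightarrow> real) \<Rightarrow> 'a \<Rightarrow> real" where
  "poisson_sol \<pi> P f = (THE h. (\<forall>x. h x - markov_op P h x = f x) \<and> pi_exp \<pi> h = 0)"

locale ergodic_chain =
  fixes \<pi> :: "'a::finite \<Rightarrow> real" and P :: "'a \<Rightarrow> 'a \<Rightarrow> real"
  assumes transition: "transition_matrix P"
    and irreducible: "irreducible_chain P"
    and stationary_pi: "stationary \<pi> P"
    and prob: "(\<Sum>x\<in>UNIV. \<pi> x) = 1"
begin

lemma pi_exp_shifted_poisson: "pi_exp \<pi> (\<lambda>x. k x - markov_op P k x + c) = c"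
  using pi_exp_markov_op[OF stationary_pi, of k] prob
  by (simp add: pi_exp_add pi_exp_diff pi_exp_const)

lemma shifted_poisson_eq_0:
  assumes "\<And>x. k x - markov_op P k x + pi_exp \<pi> k = 0"
  shows "k = (\<lambda>_. 0)"
proof -
  have "pi_exp \<pi> k = 0"
    using pi_exp_shifted_poisson[of k "pi_exp \<pi> k"] assms by (simp add: pi_exp_def)
  then have "markov_op P k x = k x" for x
    using assms[of x] by simp
  then have const: "k x = k y" for x y
    using harmonic_const[OF transition irreducible] by blast
  have "pi_exp \<pi> k = k x" for x
  proof -
    have "pi_exp \<pi> k = pi_exp \<pi> (\<lambda>_. k x)"
      unfolding pi_exp_def using const by metis
    then show ?thesis using prob by (simp add: pi_exp_const)
  qed
  then show ?thesis using \<open>pi_exp \<pi> k = 0\<close> by auto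
qed

lemma poisson_exists:
  assumes "pi_exp \<pi> g = 0"
  shows "\<exists>h. (\<forall>x. h x - markov_op P h x = g x) \<and> pi_exp \<pi> h = 0"
proof -
  define A :: "real^'a^'a" where "A = (\<chi> x y. (if x = y then 1 else 0) - P x y + \<pi> y)"
  have A_mult: "(A *v v) $ x = v $ x - markov_op P (($) v) x + pi_exp \<pi> (($) v)" for v x
  proof -
    have "(A *v v) $ x = (\<Sum>y\<in>UNIV. (if x = y then v $ y else 0) - P x y * v $ y + \<pi> y * v $ y)"
      unfolding A_def matrix_vector_mult_def by (auto intro!: sum.cong simp: algebra_simps)
    then show ?thesis
      by (simp add: sum.distrib sum_subtractf markov_op_def pi_exp_def)
  qed
  have "v = 0" if "A *v v = 0" for v
  proof -
    have "($) v = (\<lambda>_. 0)"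
      using A_mult[of v] that by (intro shifted_poisson_eq_0) simp
    then show "v = 0" by (simp add: vec_eq_iff fun_eq_iff)
  qed
  then have "inj ((*v) A)"
    by (metis injI eq_iff_diff_eq_0 matrix_vector_mult_diff_distrib)
  then have "surj ((*v) A)"
    using full_rank_injective full_rank_surjective by metis
  then obtain v where v: "(\<chi> x. g x) = A *v v" by (rule surjE)
  have shifted: "v $ x - markov_op P (($) v) x + pi_exp \<pi> (($) v) = g x" for x
    using A_mult[of v x] by (simp add: v[symmetric])
  then have "pi_exp \<pi> (($) v) = pi_exp \<pi> g"
    using pi_exp_shifted_poisson[of "($) v" "pi_exp \<pi> (($) v)"] by simp
  then show ?thesis using shifted assms by auto
qed

lemma poisson_unique:
  assumes "\<And>x. h x - markov_op P h x = f x" and "pi_exp \<pi> h = 0"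
    and "\<And>x. h' x - markov_op P h' x = f x" and "pi_exp \<pi> h' = 0"
  shows "h = h'"
proof -
  have "(\<lambda>x. h x - h' x) = (\<lambda>_. 0)"
  proof (rule shifted_poisson_eq_0)
    fix x
    show "h x - h' x - markov_op P (\<lambda>x. h x - h' x) x + pi_exp \<pi> (\<lambda>x. h x - h' x) = 0"
      using assms(1)[of x] assms(3)[of x] assms(2,4) by (simp add: markov_op_diff pi_exp_diff)
  qed
  then show ?thesis by (simp add: fun_eq_iff)
qed

lemma poisson_sol:
  assumes "pi_exp \<pi> f = 0"
  shows "poisson_sol \<pi> P f x - markov_op P (poisson_sol \<pi> P f) x = f x"
    and "pi_exp \<pi> (poisson_sol \<pi> P f) = 0"
proof -
  have "\<exists>!h. (\<forall>x. h x - markov_op P h x = f x) \<and> pi_exp \<pi> h = 0"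
    using poisson_exists[OF assms] poisson_unique by blast
  then have "(\<forall>x. poisson_sol \<pi> P f x - markov_op P (poisson_sol \<pi> P f) x = f x)
      \<and> pi_exp \<pi> (poisson_sol \<pi> P f) = 0"
    unfolding poisson_sol_def by (rule theI')
  then show "poisson_sol \<pi> P f x - markov_op P (poisson_sol \<pi> P f) x = f x"
    and "pi_exp \<pi> (poisson_sol \<pi> P f) = 0"
    by auto
qed

lemma poisson_sol_eqI:
  assumes "\<And>x. h x - markov_op P h x = f x" and "pi_exp \<pi> h = 0"
  shows "poisson_sol \<pi> P f = h"
  unfolding poisson_sol_def
proof (rule the_equality)
  show "(\<forall>x. h x - markov_op P h x = f x) \<and> pi_exp \<pi> h = 0" using assms by blast
next
  fix h' assume "(\<forall>x. h' x - markov_op P h' x = f x) \<and> pi_exp \<pi> h' = 0"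
  then show "h' = h" using assms poisson_unique by blast
qed

lemma poisson_sol_add:
  assumes f: "pi_exp \<pi> f = 0" and g: "pi_exp \<pi> g = 0"
  shows "poisson_sol \<pi> P (\<lambda>x. f x + g x) = (\<lambda>x. poisson_sol \<pi> P f x + poisson_sol \<pi> P g x)"
proof (rule poisson_sol_eqI)
  fix x
  show "poisson_sol \<pi> P f x + poisson_sol \<pi> P g x
      - markov_op P (\<lambda>x. poisson_sol \<pi> P f x + poisson_sol \<pi> P g x) x = f x + g x"
    using poisson_sol(1)[OF f, of x] poisson_sol(1)[OF g, of x] by (simp add: markov_op_add)
next
  show "pi_exp \<pi> (\<lambda>x. poisson_sol \<pi> P f x + poisson_sol \<pi> P g x) = 0"
    using poisson_sol(2)[OF f] poisson_sol(2)[OF g] by (simp add: pi_exp_add)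
qed

lemma asym_var_eq:
  assumes f: "pi_exp \<pi> f = 0"
  shows "asym_var \<pi> f P = 2 * pi_inner \<pi> f (poisson_sol \<pi> P f) - pi_inner \<pi> f f"
proof -
  define h where "h = poisson_sol \<pi> P f"
  have h: "h x - markov_op P h x = f x" for x
    using poisson_sol(1)[OF f] by (simp add: h_def)
  obtain u where u: "\<And>x. u x - markov_op P u x = h x"
    using poisson_exists poisson_sol(2)[OF f] unfolding h_def by blast
  have var: "chain_sum_var \<pi> P f N = real N * (2 * pi_inner \<pi> f h - pi_inner \<pi> f f)
      + 2 * (pi_inner \<pi> f ((markov_op P ^^ Suc N) u) - pi_inner \<pi> f (markov_op P u))" for N
    by (rule chain_sum_var_poisson[OF transition stationary_pi prob f h u])
  define B where "B = (\<Sum>x\<in>UNIV. \<bar>u x\<bar>)"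
  have "\<bar>u y\<bar> \<le> B" for y
    unfolding B_def by (rule member_le_sum) auto
  then have bound: "\<bar>pi_inner \<pi> f ((markov_op P ^^ k) u)\<bar> \<le> (\<Sum>x\<in>UNIV. \<bar>\<pi> x * f x\<bar>) * B" for k
    by (intro abs_pi_inner_le abs_markov_op_funpow_le[OF transition])
  have "(\<lambda>N. chain_sum_var \<pi> P f N / real N) \<longlonglongrightarrow> 2 * pi_inner \<pi> f h - pi_inner \<pi> f f"
  proof (rule LIMSEQ_div_linear_plus_bounded[OF var])
    fix N
    show "\<bar>2 * (pi_inner \<pi> f ((markov_op P ^^ Suc N) u) - pi_inner \<pi> f (markov_op P u))\<bar>
        \<le> 4 * ((\<Sum>x\<in>UNIV. \<bar>\<pi> x * f x\<bar>) * B)"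
      using bound[of "Suc N"] bound[of 1] by (auto simp: abs_le_iff)
  qed
  then show ?thesis
    unfolding asym_var_def h_def by (rule limI)
qed

end

locale reversible_chain = ergodic_chain +
  assumes reversible: "reversible \<pi> P"
begin

lemma poisson_sol_symmetric:
  assumes f: "pi_exp \<pi> f = 0" and g: "pi_exp \<pi> g = 0"
  shows "pi_inner \<pi> f (poisson_sol \<pi> P g) = pi_inner \<pi> (poisson_sol \<pi> P f) g"
proof -
  define hf where "hf = poisson_sol \<pi> P f"
  define hg where "hg = poisson_sol \<pi> P g"
  have f_eq: "f = (\<lambda>x. hf x - markov_op P hf x)"
    using poisson_sol(1)[OF f] by (simp add: hf_def fun_eq_iff)
  have g_eq: "g = (\<lambda>x. hg x - markov_op P hg x)"
    using poisson_sol(1)[OF g] by (simp add: hg_def fun_eq_iff)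
  have "pi_inner \<pi> f hg = pi_inner \<pi> hf hg - pi_inner \<pi> (markov_op P hf) hg"
    by (subst f_eq) (rule pi_inner_diff_left)
  also have "\<dots> = pi_inner \<pi> hf hg - pi_inner \<pi> hf (markov_op P hg)"
    using pi_inner_markov_op[OF reversible] by simp
  also have "\<dots> = pi_inner \<pi> hf g"
    by (subst g_eq) (rule pi_inner_diff_right[symmetric])
  finally show ?thesis by (simp add: hf_def hg_def)
qed

lemma poisson_form_polarization:
  assumes f: "pi_exp \<pi> f = 0" and g: "pi_exp \<pi> g = 0"
  shows "2 * pi_inner \<pi> f (poisson_sol \<pi> P g)
    = pi_inner \<pi> (\<lambda>x. f x + g x) (poisson_sol \<pi> P (\<lambda>x. f x + g x))
      - pi_inner \<pi> f (poisson_sol \<pi> P f) - pi_inner \<pi> g (poisson_sol \<pi> P g)"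
  using poisson_sol_symmetric[OF f g]
  by (simp add: poisson_sol_add[OF f g] pi_inner_add_left pi_inner_add_right
      pi_inner_commute[of \<pi> "poisson_sol \<pi> P f" g])

end

section \<open>The asymptotic variance determines a reversible chain\<close>

lemma poisson_sol_eq_if_forms_eq:
  assumes P: "reversible_chain \<pi> P" and Q: "reversible_chain \<pi> Q" and pos: "\<forall>x. \<pi> x > 0"
    and forms: "\<And>f. pi_exp \<pi> f = 0
      \<Longrightarrow> pi_inner \<pi> f (poisson_sol \<pi> P f) = pi_inner \<pi> f (poisson_sol \<pi> Q f)"
    and g: "pi_exp \<pi> g = 0"
  shows "poisson_sol \<pi> P g = poisson_sol \<pi> Q g"
proof -
  interpret P: reversible_chain \<pi> P by (fact P)
  interpret Q: reversible_chain \<pi> Q by (fact Q)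
  have cross: "pi_inner \<pi> f (poisson_sol \<pi> P g) = pi_inner \<pi> f (poisson_sol \<pi> Q g)"
    if f: "pi_exp \<pi> f = 0" for f
  proof -
    have "pi_exp \<pi> (\<lambda>x. f x + g x) = 0" using f g by (simp add: pi_exp_add)
    then show ?thesis
      using P.poisson_form_polarization[OF f g] Q.poisson_form_polarization[OF f g]
        forms[OF f] forms[OF g] forms[of "\<lambda>x. f x + g x"]
      by linarith
  qed
  let ?r = "\<lambda>x. poisson_sol \<pi> P g x - poisson_sol \<pi> Q g x"
  have "pi_exp \<pi> ?r = 0"
    using P.poisson_sol(2)[OF g] Q.poisson_sol(2)[OF g] by (simp add: pi_exp_diff)
  then have "pi_inner \<pi> ?r ?r = 0"
    using cross by (simp add: pi_inner_diff_right)
  then have "?r = (\<lambda>_. 0)" by (rule pi_inner_self_eq_0[OF pos])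
  then show ?thesis by (simp add: fun_eq_iff)
qed

lemma markov_op_eq_if_poisson_sol_eq:
  assumes P: "ergodic_chain \<pi> P" and Q: "ergodic_chain \<pi> Q"
    and sol: "\<And>g. pi_exp \<pi> g = 0 \<Longrightarrow> poisson_sol \<pi> P g = poisson_sol \<pi> Q g"
    and u: "pi_exp \<pi> u = 0"
  shows "markov_op P u = markov_op Q u"
proof -
  interpret P: ergodic_chain \<pi> P by (fact P)
  interpret Q: ergodic_chain \<pi> Q by (fact Q)
  define g where "g = (\<lambda>x. u x - markov_op P u x)"
  have g: "pi_exp \<pi> g = 0"
    using u pi_exp_markov_op[OF P.stationary_pi] by (simp add: g_def pi_exp_diff)
  have "poisson_sol \<pi> P g = u" by (rule P.poisson_sol_eqI) (simp_all add: g_def u)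
  then have "poisson_sol \<pi> Q g = u" using sol[OF g] by simp
  then have "u x - markov_op Q u x = g x" for x using Q.poisson_sol(1)[OF g, of x] by simp
  then show ?thesis by (simp add: g_def fun_eq_iff)
qed

lemma transition_matrix_eqI:
  assumes "transition_matrix P" and "transition_matrix Q" and "(\<Sum>x\<in>UNIV. \<pi> x) = 1"
    and "\<And>u. pi_exp \<pi> u = 0 \<Longrightarrow> markov_op P u = markov_op Q u"
  shows "P = Q"
proof (intro ext)
  fix x y :: 'a
  define w where "w = (\<lambda>z. if z = y then 1 else (0::real))"
  have "pi_exp \<pi> (\<lambda>z. w z - pi_exp \<pi> w) = 0"
    using assms(3) by (simp add: pi_exp_diff pi_exp_const)
  then have "markov_op P (\<lambda>z. w z - pi_exp \<pi> w) x = markov_op Q (\<lambda>z. w z - pi_exp \<pi> w) x"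
    using assms(4) by metis
  then have "markov_op P w x = markov_op Q w x"
    using assms(1,2) by (simp add: markov_op_diff markov_op_const)
  then show "P x y = Q x y" by (simp add: w_def markov_op_indicator)
qed

lemma reversible_chain_eq_if_asym_var_eq:
  assumes P: "reversible_chain \<pi> P" and Q: "reversible_chain \<pi> Q" and pos: "\<forall>x. \<pi> x > 0"
    and same_asym_var: "\<And>f. asym_var \<pi> f P = asym_var \<pi> f Q"
  shows "P = Q"
proof -
  interpret P: reversible_chain \<pi> P by (fact P)
  interpret Q: reversible_chain \<pi> Q by (fact Q)
  have "pi_inner \<pi> f (poisson_sol \<pi> P f) = pi_inner \<pi> f (poisson_sol \<pi> Q f)"
    if "pi_exp \<pi> f = 0" for f
    using same_asym_var[of f] P.asym_var_eq[OF that] Q.asym_var_eq[OF that] by simp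
  then have "poisson_sol \<pi> P g = poisson_sol \<pi> Q g" if "pi_exp \<pi> g = 0" for g
    using poisson_sol_eq_if_forms_eq[OF P Q pos] that by blast
  then have "markov_op P u = markov_op Q u" if "pi_exp \<pi> u = 0" for u
    using markov_op_eq_if_poisson_sol_eq[OF P.ergodic_chain_axioms Q.ergodic_chain_axioms] that
    by blast
  then show "P = Q" by (rule transition_matrix_eqI[OF P.transition Q.transition P.prob])
qed

theorem theorem3:
  fixes \<pi> :: "'a::finite \<Rightarrow> real"
  assumes pos: "\<forall>x. \<pi> x > 0"
    and sum1: "(\<Sum>x\<in>UNIV. \<pi> x) = 1"
  defines "M \<equiv> {P. transition_matrix P \<and> irreducible_chain P \<and> reversible \<pi> P}"
  shows "(\<forall>P\<in>M. eff_dominates \<pi> P P)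
    \<and> (\<forall>P\<in>M. \<forall>Q\<in>M. eff_dominates \<pi> P Q \<and> eff_dominates \<pi> Q P \<longrightarrow> P = Q)
    \<and> (\<forall>P\<in>M. \<forall>Q\<in>M. \<forall>R\<in>M. eff_dominates \<pi> P Q \<and> eff_dominates \<pi> Q R \<longrightarrow> eff_dominates \<pi> P R)"
proof -
  have chain: "reversible_chain \<pi> P" if "P \<in> M" for P
    using that sum1 unfolding M_def
    by (auto intro!: reversible_chain.intro ergodic_chain.intro reversible_chain_axioms.intro
        reversible_imp_stationary)
  show ?thesis
  proof (intro conjI ballI impI)
    fix P show "eff_dominates \<pi> P P" by (simp add: eff_dominates_def)
  next
    fix P Q assume "P \<in> M" "Q \<in> M" and "eff_dominates \<pi> P Q \<and> eff_dominates \<pi> Q P"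
    then show "P = Q"
      unfolding eff_dominates_def
      by (intro reversible_chain_eq_if_asym_var_eq[OF chain chain pos]) (auto intro: order_antisym)
  next
    fix P Q R assume "eff_dominates \<pi> P Q \<and> eff_dominates \<pi> Q R"
    then show "eff_dominates \<pi> P R" unfolding eff_dominates_def by (meson order_trans)
  qed
qed

end
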